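(* Let $E_0\subset D(0,1)\setminus\{0\}$, $E_\infty\subset\mathbb{C}\setminus\overline{D}(0,1)$ be finite and let $\widetilde a\in\Sigma_0\setminus\widetilde{E_0}$. The natural transformation $\Gamma_{0,\widetilde a}$ given on objects of $\mathcal{C}_{E_0,E_\infty}$ by $(A_0,A_1,A_\infty,\widetilde{M_0},\widetilde{M_\infty})\mapsto\widetilde{M_0}(\widetilde a)$ is an isomorphism of tensor functors from $\omega_0$ to $\omega_1^{(\widetilde a)}$, i.e. an element of $\mathrm{Iso}^\otimes(\omega_0,\omega_1^{(\widetilde a)})$.
   Context: Fix an integer $p\ge2$. Let $\widetilde{\mathbb{C}^\star}=\{(re^{ib},b): r>0, b\in\mathbb{R}\}$, $\widetilde1=(1,0)$, $\widetilde{\log}(re^{ib},b)=\log r+ib$, $\pi=\exp\circ\widetilde{\log}$, $\phi_p(re^{ib},b)=(r^pe^{ipb},pb)$; $\phi_p(W)=W\circ\phi_p$, $\pi^\star W=W\circ\pi$. $\Sigma_0=\{(re^{ib},b):0<r<1\}$, $\Sigma_\infty=\{(re^{ib},b):r>1\}$. Objects of the category $\mathcal{C}$ of rank $n$: tuples $(A_0,A_1,A_\infty,\widetilde{M_0},\widetilde{M_\infty})$ with $A_i\in GL_n(\mathbb{C})$, $\widetilde{M_0}\in GL_n(\mathcal{M}(\Sigma_0))$, $\widetilde{M_\infty}\in GL_n(\mathcal{M}(\Sigma_\infty))$, $\phi_p(\widetilde{M_0})=A_1\widetilde{M_0}A_0^{-1}$, $\phi_p(\widetilde{M_\infty})=A_1\widetilde{M_\infty}A_\infty^{-1}$,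 such that there are $\widetilde{W_1}\in GL_n(\mathcal{M}(\widetilde{\mathbb{C}^\star}))$, $W_0\in GL_n(\mathcal{M}(D(0,1)))$, $W_\infty\in GL_n(\mathcal{M}(\mathbb{P}^1(\mathbb{C})\setminus\overline{D}(0,1)))$ with $\widetilde{W_1}\widetilde{M_0}=\pi^\star W_0$, $\widetilde{W_1}\widetilde{M_\infty}=\pi^\star W_\infty$. Morphisms to $(B_0,B_1,B_\infty,\widetilde{N_0},\widetilde{N_\infty})$: triples $(S_0,\widetilde{S_1},S_\infty)$ with $S_0,S_\infty$ constant, $\widetilde{S_1}$ with entries Laurent polynomials in $\widetilde{\log}$, $S_0A_0=B_0S_0$, $\phi_p(\widetilde{S_1})A_1=B_1\widetilde{S_1}$, $S_\infty A_\infty=B_\infty S_\infty$, $\widetilde{S_1}\widetilde{M_0}=\widetilde{N_0}S_0$, $\widetilde{S_1}\widetilde{M_\infty}=\widetilde{N_\infty}S_\infty$; tensor product is componentwise Kronecker product. The fibre functors $\omega_0$ and $\omega_1^{(\widetilde a)}$ send a rank $n$ object to $\mathbb{C}^n$ and a morphism to $S_0$, resp. $\widetilde{S_1}(\widetilde a)$. For finite $E\subset\mathbb{C}^\star$, $E^{p^k}=\{z^{p^k}:z\in E\}$ ($k\ge0$), $E^{p^k}=\{z:z^{p^{-k}}\in E\}$ ($k<0$), $\widetilde E=\pi^{-1}(\bigcup_kE^{p^k})$. The singular locus $S(M)$ is the set of poles of $M$ together with zeros of $\det M$. $\mathcal{C}_{E_0,E_\infty}$ is the full subcategory of objects with $S(\widetilde{M_0})\subset\widetilde{E_0}$,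 $S(\widetilde{M_\infty})\subset\widetilde{E_\infty}$, and $\omega_0,\omega_1^{(\widetilde a)}$ are restricted to it. *)

theory Defs
  imports "HOL-Complex_Analysis.Complex_Analysis" "Jordan_Normal_Form.Determinant"
begin

text \<open>A point (r e^{ib}, b) of the universal cover of C* is encoded by its
  tilde-log coordinate w = log r + i b, a bijection onto the complex plane. Under this
  encoding: pi = exp, phi_p acts by w |-> p w, tilde-log is the identity,
  Sigma_0 = {Re w < 0}, Sigma_infinity = {Re w > 0}, tilde-1 = 0.\<close>

definition Sigma0 :: "complex set" where "Sigma0 = {w. Re w < 0}"
definition SigmaInf :: "complex set" where "SigmaInf = {w. Re w > 0}"

definition Epow :: "complex set \<Rightarrow> nat \<Rightarrow> int \<Rightarrow> complex set" where
  "Epow E p k = (if k \<ge> 0 then (\<lambda>z. z ^ (p ^ nat k)) ` E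
                 else {z. z ^ (p ^ nat (- k)) \<in> E})"

definition Etil :: "complex set \<Rightarrow> nat \<Rightarrow> complex set" where
  "Etil E p = {w. exp w \<in> (\<Union>k. Epow E p k)}"

text \<open>Kronecker product of matrices (identification C^n (x) C^m = C^{nm}).\<close>
definition kron :: "complex mat \<Rightarrow> complex mat \<Rightarrow> complex mat" where
  "kron A B = mat (dim_row A * dim_row B) (dim_col A * dim_col B)
     (\<lambda>(i, j). A $$ (i div dim_row B, j div dim_col B) * B $$ (i mod dim_row B, j mod dim_col B))"

text \<open>Matrix-valued functions; P is the predicate "meromorphic function on the domain"
  applied entrywise, U is the (finite part of the) domain on which equalities of
  meromorphic functions are tested (equality off a sparse set = equality in M(U)).\<close>
definition mero_eq :: "complex set \<Rightarrow> (complex \<Rightarrow> complex mat) \<Rightarrow> (complex \<Rightarrow> complex mat) \<Rightarrow> bool" where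
  "mero_eq U F G \<longleftrightarrow> {w \<in> U. F w \<noteq> G w} sparse_in U"

definition mat_fun :: "((complex \<Rightarrow> complex) \<Rightarrow> bool) \<Rightarrow> nat \<Rightarrow> nat \<Rightarrow> (complex \<Rightarrow> complex mat) \<Rightarrow> bool" where
  "mat_fun P n m M \<longleftrightarrow> (\<forall>w. M w \<in> carrier_mat n m) \<and> (\<forall>i<n. \<forall>j<m. P (\<lambda>w. M w $$ (i, j)))"

definition mero_GL :: "((complex \<Rightarrow> complex) \<Rightarrow> bool) \<Rightarrow> complex set \<Rightarrow> nat \<Rightarrow> (complex \<Rightarrow> complex mat) \<Rightarrow> bool" where
  "mero_GL P U n M \<longleftrightarrow> mat_fun P n n M \<and>
     (\<exists>N. mat_fun P n n N \<and> mero_eq U (\<lambda>w. M w * N w) (\<lambda>_. 1\<^sub>m n)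
                          \<and> mero_eq U (\<lambda>w. N w * M w) (\<lambda>_. 1\<^sub>m n))"

definition mero_Sigma0 :: "(complex \<Rightarrow> complex) \<Rightarrow> bool" where
  "mero_Sigma0 f \<longleftrightarrow> f nicely_meromorphic_on Sigma0"
definition mero_SigmaInf :: "(complex \<Rightarrow> complex) \<Rightarrow> bool" where
  "mero_SigmaInf f \<longleftrightarrow> f nicely_meromorphic_on SigmaInf"
definition mero_cover :: "(complex \<Rightarrow> complex) \<Rightarrow> bool" where
  "mero_cover f \<longleftrightarrow> f nicely_meromorphic_on UNIV"
definition mero_disc :: "(complex \<Rightarrow> complex) \<Rightarrow> bool" where
  "mero_disc f \<longleftrightarrow> f nicely_meromorphic_on ball 0 1"
text \<open>Meromorphic on P^1(C) minus the closed unit disc (including the point at infinity).\<close>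
definition mero_outside :: "(complex \<Rightarrow> complex) \<Rightarrow> bool" where
  "mero_outside f \<longleftrightarrow> f nicely_meromorphic_on {z. 1 < norm z} \<and> (\<lambda>z. f (inverse z)) meromorphic_on {0}"

type_synonym obj = "complex mat \<times> complex mat \<times> complex mat \<times> (complex \<Rightarrow> complex mat) \<times> (complex \<Rightarrow> complex mat)"
type_synonym mor = "complex mat \<times> (complex \<Rightarrow> complex mat) \<times> complex mat"

definition is_obj :: "nat \<Rightarrow> nat \<Rightarrow> obj \<Rightarrow> bool" where
  "is_obj p n X \<longleftrightarrow> (case X of (A0, A1, Ai, M0, Mi) \<Rightarrow>
     A0 \<in> carrier_mat n n \<and> A1 \<in> carrier_mat n n \<and> Ai \<in> carrier_mat n n \<and>
     invertible_mat A0 \<and> invertible_mat A1 \<and> invertible_mat Ai \<and>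
     mero_GL mero_Sigma0 Sigma0 n M0 \<and> mero_GL mero_SigmaInf SigmaInf n Mi \<and>
     mero_eq Sigma0 (\<lambda>w. M0 (of_nat p * w) * A0) (\<lambda>w. A1 * M0 w) \<and>
     mero_eq SigmaInf (\<lambda>w. Mi (of_nat p * w) * Ai) (\<lambda>w. A1 * Mi w) \<and>
     (\<exists>W1 W0 Wi. mero_GL mero_cover UNIV n W1 \<and> mero_GL mero_disc (ball 0 1) n W0 \<and>
        mero_GL mero_outside {z. 1 < norm z} n Wi \<and>
        mero_eq Sigma0 (\<lambda>w. W1 w * M0 w) (\<lambda>w. W0 (exp w)) \<and>
        mero_eq SigmaInf (\<lambda>w. W1 w * Mi w) (\<lambda>w. Wi (exp w))))"

definition sing_locus :: "complex set \<Rightarrow> nat \<Rightarrow> (complex \<Rightarrow> complex mat) \<Rightarrow> complex set" where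
  "sing_locus U n M = {w \<in> U. (\<exists>i<n. \<exists>j<n. is_pole (\<lambda>z. M z $$ (i, j)) w) \<or> det (M w) = 0}"

definition in_CE :: "nat \<Rightarrow> complex set \<Rightarrow> complex set \<Rightarrow> nat \<Rightarrow> obj \<Rightarrow> bool" where
  "in_CE p E0 Ei n X \<longleftrightarrow> is_obj p n X \<and> (case X of (A0, A1, Ai, M0, Mi) \<Rightarrow>
     sing_locus Sigma0 n M0 \<subseteq> Etil E0 p \<and> sing_locus SigmaInf n Mi \<subseteq> Etil Ei p)"

text \<open>Entries that are Laurent polynomials in tilde-log (= the coordinate w).\<close>
definition laurent_poly_fun :: "(complex \<Rightarrow> complex) \<Rightarrow> bool" where
  "laurent_poly_fun f \<longleftrightarrow> (\<exists>N::int. \<exists>c::int \<Rightarrow> complex.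
      \<forall>w. w \<noteq> 0 \<longrightarrow> f w = (\<Sum>k\<in>{-N..N}. c k * w powi k))"

definition is_mor :: "nat \<Rightarrow> nat \<Rightarrow> nat \<Rightarrow> obj \<Rightarrow> obj \<Rightarrow> mor \<Rightarrow> bool" where
  "is_mor p n m X Y f \<longleftrightarrow> is_obj p n X \<and> is_obj p m Y \<and>
    (case X of (A0, A1, Ai, M0, Mi) \<Rightarrow> case Y of (B0, B1, Bi, N0, Ni) \<Rightarrow> case f of (S0, S1, Si) \<Rightarrow>
      S0 \<in> carrier_mat m n \<and> Si \<in> carrier_mat m n \<and> mat_fun laurent_poly_fun m n S1 \<and>
      S0 * A0 = B0 * S0 \<and> Si * Ai = Bi * Si \<and>
      mero_eq (UNIV - {0}) (\<lambda>w. S1 (of_nat p * w) * A1) (\<lambda>w. B1 * S1 w) \<and>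
      mero_eq Sigma0 (\<lambda>w. S1 w * M0 w) (\<lambda>w. N0 w * S0) \<and>
      mero_eq SigmaInf (\<lambda>w. S1 w * Mi w) (\<lambda>w. Ni w * Si))"

definition tensor_obj :: "obj \<Rightarrow> obj \<Rightarrow> obj" where
  "tensor_obj X Y = (case X of (A0, A1, Ai, M0, Mi) \<Rightarrow> case Y of (B0, B1, Bi, N0, Ni) \<Rightarrow>
     (kron A0 B0, kron A1 B1, kron Ai Bi, \<lambda>w. kron (M0 w) (N0 w), \<lambda>w. kron (Mi w) (Ni w)))"

definition unit_obj :: obj where
  "unit_obj = (1\<^sub>m 1, 1\<^sub>m 1, 1\<^sub>m 1, \<lambda>_. 1\<^sub>m 1, \<lambda>_. 1\<^sub>m 1)"

text \<open>Fibre functors on morphisms (on objects both give C^n).\<close>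
definition omega0 :: "mor \<Rightarrow> complex mat" where "omega0 f = fst f"
definition omega1 :: "complex \<Rightarrow> mor \<Rightarrow> complex mat" where "omega1 a f = fst (snd f) a"

definition Gamma0 :: "complex \<Rightarrow> obj \<Rightarrow> complex mat" where
  "Gamma0 a X = (case X of (A0, A1, Ai, M0, Mi) \<Rightarrow> M0 a)"

end

theory Submission
  imports Defs
begin

text \<open>At a point a of Sigma_0 outside the singular locus, every entry of M_0 is continuous
  at a and det (M_0 a) is nonzero, so Gamma_{0,a} X = M_0 a is invertible. For a morphism
  (S_0, S_1, S_infinity) the identity S_1 M_0 = N_0 S_0 holds off a sparse subset of
  Sigma_0; since the entries of S_1 are Laurent polynomials in w and a is nonzero, both sides
  are continuous at a and the identity survives evaluation at a, which is naturality. Neither p nor the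
  finiteness and location of E_0, E_infinity play any role.\<close>

lemma invertible_mat_if_det_nonzero:
  fixes A :: "'a::field mat"
  assumes A: "A \<in> carrier_mat n n" and "det A \<noteq> 0"
  shows "invertible_mat A"
proof -
  from det_non_zero_imp_unit[OF assms, of "()"] obtain B where
    "B \<in> carrier_mat n n" "B * A = 1\<^sub>m n" "A * B = 1\<^sub>m n"
    unfolding Units_def ring_mat_def by auto
  with A show ?thesis
    unfolding invertible_mat_def inverts_mat_def by auto
qed

lemma laurent_poly_fun_isCont:
  assumes "laurent_poly_fun f" and "a \<noteq> 0"
  shows "isCont f a"
proof -
  obtain N c where f: "\<And>w. w \<noteq> 0 \<Longrightarrow> f w = (\<Sum>k\<in>{-N..N}. c k * w powi k)"
    using assms(1) unfolding laurent_poly_fun_def by blast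
  let ?g = "\<lambda>w. \<Sum>k\<in>{-N..N}. c k * w powi k"
  have "isCont ?g a"
    using assms(2) by (intro continuous_intros) auto
  moreover have "\<forall>\<^sub>F w in at a. ?g w = f w"
    using eventually_neq_at_within[of 0 a UNIV] by eventually_elim (simp add: f)
  ultimately show ?thesis
    unfolding isCont_def using f[OF assms(2)] by (simp add: Lim_transform_eventually)
qed

lemma mero_eq_eventually_at:
  assumes "mero_eq U F G" and "open U" and "a \<in> U"
  shows "\<forall>\<^sub>F w in at a. F w = G w"
proof -
  have "\<forall>\<^sub>F w in at a. w \<notin> {w \<in> U. F w \<noteq> G w}"
    using assms unfolding mero_eq_def sparse_in_eventually_iff[OF \<open>open U\<close>] by blast
  moreover have "\<forall>\<^sub>F w in at a. w \<in> U"
    using assms(2,3) eventually_at_topological by blast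
  ultimately show ?thesis
    by eventually_elim auto
qed

definition entrywise_isCont ::
    "nat \<Rightarrow> nat \<Rightarrow> ('a::t2_space \<Rightarrow> 'b::topological_space mat) \<Rightarrow> 'a \<Rightarrow> bool" where
  "entrywise_isCont n m F a \<longleftrightarrow> (\<forall>i<n. \<forall>j<m. isCont (\<lambda>w. F w $$ (i, j)) a)"

lemma entrywise_isCont_const: "entrywise_isCont n m (\<lambda>_. C) a"
  unfolding entrywise_isCont_def by simp

lemma entrywise_isCont_mult:
  fixes F G :: "'a::t2_space \<Rightarrow> 'b::real_normed_field mat"
  assumes "\<And>w. F w \<in> carrier_mat n k" and "\<And>w. G w \<in> carrier_mat k m"
    and "entrywise_isCont n k F a" and "entrywise_isCont k m G a"
  shows "entrywise_isCont n m (\<lambda>w. F w * G w) a"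
  unfolding entrywise_isCont_def
proof (intro allI impI)
  fix i j assume ij: "i < n" "j < m"
  have entry: "(F w * G w) $$ (i, j) = (\<Sum>l<k. F w $$ (i, l) * G w $$ (l, j))" for w
    using assms(1,2)[of w] ij by (auto simp: scalar_prod_def lessThan_atLeast0 intro!: sum.cong)
  show "isCont (\<lambda>w. (F w * G w) $$ (i, j)) a"
    unfolding entry using ij assms(3,4) unfolding entrywise_isCont_def
    by (auto intro!: continuous_intros)
qed

lemma eq_at_if_eventually_eq_entrywise_isCont:
  fixes F G :: "'a::{t2_space,perfect_space} \<Rightarrow> 'b::t2_space mat"
  assumes "F a \<in> carrier_mat n m" and "G a \<in> carrier_mat n m"
    and "entrywise_isCont n m F a" and "entrywise_isCont n m G a"
    and "\<forall>\<^sub>F w in at a. F w = G w"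
  shows "F a = G a"
proof (rule eq_matI)
  fix i j assume "i < dim_row (G a)" "j < dim_col (G a)"
  with assms(2) have ij: "i < n" "j < m" by auto
  have "((\<lambda>w. G w $$ (i, j)) \<longlongrightarrow> F a $$ (i, j)) (at a)"
  proof (rule Lim_transform_eventually)
    show "((\<lambda>w. F w $$ (i, j)) \<longlongrightarrow> F a $$ (i, j)) (at a)"
      using assms(3) ij unfolding entrywise_isCont_def isCont_def by blast
    show "\<forall>\<^sub>F w in at a. F w $$ (i, j) = G w $$ (i, j)"
      using assms(5) by eventually_elim simp
  qed
  moreover have "((\<lambda>w. G w $$ (i, j)) \<longlongrightarrow> G a $$ (i, j)) (at a)"
    using assms(4) ij unfolding entrywise_isCont_def isCont_def by blast
  ultimately show "F a $$ (i, j) = G a $$ (i, j)"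
    by (rule tendsto_unique[OF at_neq_bot])
qed (use assms(1,2) in auto)

lemma entrywise_isCont_if_nicely_meromorphic:
  assumes "\<And>i j. i < n \<Longrightarrow> j < m \<Longrightarrow> (\<lambda>w. F w $$ (i, j)) nicely_meromorphic_on U"
    and "\<And>i j. i < n \<Longrightarrow> j < m \<Longrightarrow> \<not> is_pole (\<lambda>w. F w $$ (i, j)) a"
    and "a \<in> U"
  shows "entrywise_isCont n m F a"
  unfolding entrywise_isCont_def
  using assms nicely_meromorphic_on_imp_analytic_at analytic_at_imp_isCont by blast

lemma is_obj_M0_carrier:
  assumes "is_obj p n (A0, A1, Ai, M0, Mi)"
  shows "M0 w \<in> carrier_mat n n"
  using assms unfolding is_obj_def mero_GL_def mat_fun_def by auto

lemma in_CE_M0_regular_at: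
  assumes "in_CE p E0 Ei n (A0, A1, Ai, M0, Mi)" and "a \<in> Sigma0 - Etil E0 p"
  shows "entrywise_isCont n n M0 a" and "det (M0 a) \<noteq> 0"
proof -
  show "entrywise_isCont n n M0 a"
  proof (rule entrywise_isCont_if_nicely_meromorphic)
    show "(\<lambda>w. M0 w $$ (i, j)) nicely_meromorphic_on Sigma0" if "i < n" "j < n" for i j
      using assms(1) that
      unfolding in_CE_def is_obj_def mero_GL_def mat_fun_def mero_Sigma0_def by auto
    show "\<not> is_pole (\<lambda>w. M0 w $$ (i, j)) a" if "i < n" "j < n" for i j
      using assms that unfolding in_CE_def sing_locus_def by auto
  qed (use assms(2) in blast)
  show "det (M0 a) \<noteq> 0"
    using assms unfolding in_CE_def sing_locus_def by auto
qed

lemma Gamma0_invertible: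
  assumes X: "in_CE p E0 Ei n X" and a: "a \<in> Sigma0 - Etil E0 p"
  shows "Gamma0 a X \<in> carrier_mat n n" and "invertible_mat (Gamma0 a X)"
proof -
  obtain A0 A1 Ai M0 Mi where X_def: "X = (A0, A1, Ai, M0, Mi)" by (cases X)
  have "M0 a \<in> carrier_mat n n"
    using X is_obj_M0_carrier unfolding X_def in_CE_def by blast
  with in_CE_M0_regular_at(2)[OF X[unfolded X_def] a] show
    "Gamma0 a X \<in> carrier_mat n n" and "invertible_mat (Gamma0 a X)"
    by (auto simp: Gamma0_def X_def intro: invertible_mat_if_det_nonzero)
qed

lemma Gamma0_natural:
  assumes X: "in_CE p E0 Ei n X" and Y: "in_CE p E0 Ei m Y" and f: "is_mor p n m X Y f"
    and a: "a \<in> Sigma0 - Etil E0 p"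
  shows "omega1 a f * Gamma0 a X = Gamma0 a Y * omega0 f"
proof -
  obtain A0 A1 Ai M0 Mi where X_def: "X = (A0, A1, Ai, M0, Mi)" by (cases X)
  obtain B0 B1 Bi N0 Ni where Y_def: "Y = (B0, B1, Bi, N0, Ni)" by (cases Y)
  obtain S0 S1 Si where f_def: "f = (S0, S1, Si)" by (cases f)
  note X' = X[unfolded X_def] and Y' = Y[unfolded Y_def]
  note f' = f[unfolded is_mor_def X_def Y_def f_def, simplified]
  have a_ne_0: "a \<noteq> 0" and a_Sigma0: "a \<in> Sigma0"
    using a by (auto simp: Sigma0_def)
  have M0: "M0 w \<in> carrier_mat n n" and N0: "N0 w \<in> carrier_mat m m" for w
    using X' Y' is_obj_M0_carrier unfolding in_CE_def by blast+
  have S0: "S0 \<in> carrier_mat m n" and S1: "S1 w \<in> carrier_mat m n" for w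
    using f' unfolding mat_fun_def by auto
  have S1_cont: "entrywise_isCont m n S1 a"
    using f' a_ne_0 laurent_poly_fun_isCont unfolding mat_fun_def entrywise_isCont_def by blast
  have "S1 a * M0 a = N0 a * S0"
  proof (rule eq_at_if_eventually_eq_entrywise_isCont
      [where F = "\<lambda>w. S1 w * M0 w" and G = "\<lambda>w. N0 w * S0"])
    show "entrywise_isCont m n (\<lambda>w. S1 w * M0 w) a"
      using S1 M0 S1_cont in_CE_M0_regular_at(1)[OF X' a] by (rule entrywise_isCont_mult)
    show "entrywise_isCont m n (\<lambda>w. N0 w * S0) a"
      using N0 S0 in_CE_M0_regular_at(1)[OF Y' a] entrywise_isCont_const
      by (rule entrywise_isCont_mult)
    show "\<forall>\<^sub>F w in at a. S1 w * M0 w = N0 w * S0"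
      using f' a_Sigma0 open_halfspace_Re_lt[of 0] mero_eq_eventually_at
      unfolding Sigma0_def by blast
  qed (use S1 M0 N0 S0 in \<open>auto intro: mult_carrier_mat\<close>)
  then show ?thesis
    by (simp add: omega1_def omega0_def Gamma0_def X_def Y_def f_def)
qed

theorem mainTheorem11:
  fixes p :: nat and E0 Ei :: "complex set" and a :: complex
  assumes "p \<ge> 2"
    and "finite E0" and "E0 \<subseteq> ball 0 1 - {0}"
    and "finite Ei" and "Ei \<subseteq> - cball 0 1"
    and "a \<in> Sigma0 - Etil E0 p"
  shows "(\<forall>n X. in_CE p E0 Ei n X \<longrightarrow>
            Gamma0 a X \<in> carrier_mat n n \<and> invertible_mat (Gamma0 a X))
       \<and> (\<forall>n m X Y f. in_CE p E0 Ei n X \<and> in_CE p E0 Ei m Y \<and> is_mor p n m X Y f \<longrightarrow>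
            omega1 a f * Gamma0 a X = Gamma0 a Y * omega0 f)
       \<and> (\<forall>n m X Y. in_CE p E0 Ei n X \<and> in_CE p E0 Ei m Y \<longrightarrow>
            Gamma0 a (tensor_obj X Y) = kron (Gamma0 a X) (Gamma0 a Y))
       \<and> Gamma0 a unit_obj = 1\<^sub>m 1"
proof (intro conjI allI impI)
  show "Gamma0 a X \<in> carrier_mat n n" "invertible_mat (Gamma0 a X)"
    if "in_CE p E0 Ei n X" for n X
    using Gamma0_invertible[OF that assms(6)] by auto
  show "omega1 a f * Gamma0 a X = Gamma0 a Y * omega0 f"
    if "in_CE p E0 Ei n X \<and> in_CE p E0 Ei m Y \<and> is_mor p n m X Y f" for n m X Y f
    using Gamma0_natural that assms(6) by blast
  show "Gamma0 a (tensor_obj X Y) = kron (Gamma0 a X) (Gamma0 a Y)" for X Y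
    by (auto simp: Gamma0_def tensor_obj_def split: prod.splits)
  show "Gamma0 a unit_obj = 1\<^sub>m 1"
    by (simp add: Gamma0_def unit_obj_def)
qed

end
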